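(* Let $K,L,T$ be positive integers and let $(\alpha,\beta)\in\mathcal{A}(K,L,T)$ be a degree table, with $N=\operatorname{N}(\alpha,\beta)$. Then: (1) $KL+\max\{K,L\}+2T-1 \le N$; (2) if $3\max\{K,L\}+3T-2 < KL$ or $2 \le K = L$, then $KL+\max\{K,L\}+2T \le N$; (3) $KL+K+L+2T-1-T\min\{K,L,T\} \le N$.
   Context: A degree table with parameters $K,L,T$ is a tuple $(\alpha_{\mathrm p},\alpha_{\mathrm s},\beta_{\mathrm p},\beta_{\mathrm s})$ of nonnegative integer vectors of lengths $K,T,L,T$ respectively such that, writing $\alpha=(\alpha_{\mathrm p}\mid\alpha_{\mathrm s})$ and $\beta=(\beta_{\mathrm p}\mid\beta_{\mathrm s})$ for the concatenations: (i) all entries of $\alpha$ are distinct; (ii) all entries of $\beta$ are distinct; (iii) for every integer $n\in\operatorname{Set}(\alpha_{\mathrm p})+\operatorname{Set}(\beta_{\mathrm p})$ there is a unique $i\in\operatorname{Set}(\alpha)$ and a unique $j\in\operatorname{Set}(\beta)$ with $n=i+j$. Here $\operatorname{Set}(v)$ is the set of entries of $v$ and $A+B=\{a+b:a\in A,b\in B\}$. $\mathcal{A}(K,L,T)$ denotes the set of all such degree tables, and $\operatorname{N}(\alpha,\beta)=|\operatorname{Set}(\alpha)+\operatorname{Set}(\beta)|$. *)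

theory Defs
  imports Main
begin

definition sumset :: "nat set \<Rightarrow> nat set \<Rightarrow> nat set" where
  "sumset A B = {a + b | a b. a \<in> A \<and> b \<in> B}"

text \<open>Degree tables: vectors are lists of natural numbers;
  alpha = ap @ as, beta = bp @ bs.\<close>
definition degree_table ::
  "nat \<Rightarrow> nat \<Rightarrow> nat \<Rightarrow> nat list \<Rightarrow> nat list \<Rightarrow> nat list \<Rightarrow> nat list \<Rightarrow> bool" where
  "degree_table K L T ap as bp bs \<longleftrightarrow>
     length ap = K \<and> length as = T \<and> length bp = L \<and> length bs = T \<and>
     distinct (ap @ as) \<and> distinct (bp @ bs) \<and>
     (\<forall>n \<in> sumset (set ap) (set bp).
        \<exists>!p. p \<in> set (ap @ as) \<times> set (bp @ bs) \<and> fst p + snd p = n)"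

definition NN :: "nat list \<Rightarrow> nat list \<Rightarrow> nat" where
  "NN \<alpha> \<beta> = card (sumset (set \<alpha>) (set \<beta>))"

end

theory Submission
  imports Defs
begin

text \<open>Write A = ap \<union> as. By uniqueness the K L sums from ap + bp are distinct and differ from
  every other sum, so N = K L + |S| where S is the set of remaining sums. S contains A + bs,
  hence |S| \<ge> |A| + T - 1 = K + 2 T - 1, and symmetrically L + 2 T - 1. For a0 \<in> as and
  b0 \<in> bs it also contains ap + b0 and a0 + bp, which share at most one element, and a0 + b0,
  hence |S| \<ge> K + L. If |S| = K + 2 T - 1 with T \<ge> 2, then A + bs = S is an extremal case of
  the sumset bound, so A, bs and S are arithmetic progressions with a common difference. For
  b \<in> bp the translate A + b meets S exactly in as + b, and this pins b down from the position
  of as inside A; so bp has only one element.\<close>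

lemma sumset_iff: "z \<in> sumset X Y \<longleftrightarrow> (\<exists>x\<in>X. \<exists>y\<in>Y. z = x + y)"
  unfolding sumset_def by blast

lemma sumset_eq_image: "sumset X Y = (\<lambda>(x, y). x + y) ` (X \<times> Y)"
  unfolding sumset_def by auto

lemma finite_sumset: "finite X \<Longrightarrow> finite Y \<Longrightarrow> finite (sumset X Y)"
  unfolding sumset_eq_image by simp

lemma sumset_commute: "sumset X Y = sumset Y X"
  unfolding sumset_def using add.commute by fastforce

lemma sumset_mono: "X \<subseteq> X' \<Longrightarrow> Y \<subseteq> Y' \<Longrightarrow> sumset X Y \<subseteq> sumset X' Y'"
  unfolding sumset_def by blast

definition sumset_chain :: "nat set \<Rightarrow> nat set \<Rightarrow> nat set" where
  "sumset_chain X Y = (\<lambda>x. x + Min Y) ` X \<union> (\<lambda>y. Max X + y) ` Y"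

lemma card_sumset_chain:
  fixes X Y :: "nat set"
  assumes "finite X" "finite Y" "X \<noteq> {}" "Y \<noteq> {}"
  shows "card (sumset_chain X Y) = card X + card Y - 1"
proof -
  let ?U = "(\<lambda>x. x + Min Y) ` X" and ?V = "(\<lambda>y. Max X + y) ` Y"
  have "?U \<inter> ?V = {Max X + Min Y}"
  proof
    show "?U \<inter> ?V \<subseteq> {Max X + Min Y}"
    proof
      fix z assume "z \<in> ?U \<inter> ?V"
      then obtain x y where "x \<in> X" "y \<in> Y" "z = x + Min Y" "z = Max X + y"
        by auto
      moreover from this have "x \<le> Max X" "Min Y \<le> y"
        using assms by simp_all
      ultimately show "z \<in> {Max X + Min Y}" by simp
    qed
    show "{Max X + Min Y} \<subseteq> ?U \<inter> ?V" using assms by auto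
  qed
  moreover have "card ?U + card ?V = card (?U \<union> ?V) + card (?U \<inter> ?V)"
    using assms by (intro card_Un_Int) auto
  moreover have "card ?U = card X" "card ?V = card Y"
    by (auto intro!: card_image simp: inj_on_def)
  ultimately show ?thesis unfolding sumset_chain_def by simp
qed

lemma sumset_chain_subset:
  fixes X Y :: "nat set"
  assumes "finite X" "finite Y" "X \<noteq> {}" "Y \<noteq> {}"
  shows "sumset_chain X Y \<subseteq> sumset X Y"
  using assms Min_in[of Y] Max_in[of X] unfolding sumset_chain_def sumset_def by blast

lemma card_sumset_ge:
  fixes X Y :: "nat set"
  assumes "finite X" "finite Y" "X \<noteq> {}" "Y \<noteq> {}"
  shows "card X + card Y - 1 \<le> card (sumset X Y)"
  using card_mono[OF finite_sumset sumset_chain_subset] card_sumset_chain assms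
  by metis

lemma sumset_eq_chain_if_card_eq:
  fixes X Y :: "nat set"
  assumes "finite X" "finite Y" "X \<noteq> {}" "Y \<noteq> {}"
    and "card (sumset X Y) = card X + card Y - 1"
  shows "sumset X Y = sumset_chain X Y"
  using card_subset_eq[OF finite_sumset sumset_chain_subset] card_sumset_chain assms
  by metis

lemma add_gap_mem_if_card_sumset_eq:
  fixes X Y :: "nat set"
  assumes fin: "finite X" "finite Y" and ne: "X \<noteq> {}" "Y \<noteq> {}"
    and card_eq: "card (sumset X Y) = card X + card Y - 1"
    and y: "y \<in> Y" "Min Y < y" and y_next: "\<And>y'. y' \<in> Y \<Longrightarrow> Min Y < y' \<Longrightarrow> y \<le> y'"
    and x: "x \<in> X" "x \<noteq> Max X"
  shows "x + (y - Min Y) \<in> X"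
proof -
  have "x + y \<in> sumset_chain X Y"
    using sumset_eq_chain_if_card_eq[OF fin ne card_eq] x y unfolding sumset_def by blast
  then show ?thesis
    unfolding sumset_chain_def
  proof
    assume "x + y \<in> (\<lambda>x. x + Min Y) ` X"
    then obtain x' where "x' \<in> X" "x + y = x' + Min Y" by auto
    then show ?thesis using y(2) by (metis add_diff_assoc less_or_eq_imp_le add_diff_cancel_right')
  next
    assume "x + y \<in> (\<lambda>y. Max X + y) ` Y"
    then obtain y' where y': "y' \<in> Y" "x + y = Max X + y'" by auto
    have "x < Max X" using x fin(1) by (simp add: order.not_eq_order_implies_strict)
    then have "y' = Min Y" using y' y_next[of y'] Min_le[OF fin(2)] by fastforce
    then have "x + (y - Min Y) = Max X" using y' y by simp
    then show ?thesis using Max_in[OF fin(1) ne(1)] by simp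
  qed
qed

definition arith_prog :: "nat \<Rightarrow> nat \<Rightarrow> nat \<Rightarrow> nat set" where
  "arith_prog a d n = (\<lambda>k. a + k * d) ` {..<n}"

lemma mem_arith_prog: "x \<in> arith_prog a d n \<longleftrightarrow> (\<exists>k<n. x = a + k * d)"
  unfolding arith_prog_def by auto

lemma card_arith_prog: "0 < d \<Longrightarrow> card (arith_prog a d n) = n"
  unfolding arith_prog_def by (subst card_image) (auto simp: inj_on_def)

lemma sumset_arith_prog:
  assumes "0 < m" "0 < n"
  shows "sumset (arith_prog a d m) (arith_prog b d n) = arith_prog (a + b) d (m + n - 1)"
proof (rule set_eqI)
  fix z
  show "z \<in> sumset (arith_prog a d m) (arith_prog b d n) \<longleftrightarrow> z \<in> arith_prog (a + b) d (m + n - 1)"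
  proof
    assume "z \<in> sumset (arith_prog a d m) (arith_prog b d n)"
    then obtain i j where "i < m" "j < n" "z = (a + i * d) + (b + j * d)"
      by (force simp: sumset_iff mem_arith_prog)
    then show "z \<in> arith_prog (a + b) d (m + n - 1)"
      unfolding mem_arith_prog by (intro exI[of _ "i + j"]) (auto simp: algebra_simps)
  next
    assume "z \<in> arith_prog (a + b) d (m + n - 1)"
    then obtain k where k: "k < m + n - 1" "z = a + b + k * d"
      unfolding mem_arith_prog by blast
    show "z \<in> sumset (arith_prog a d m) (arith_prog b d n)"
    proof (cases "k < m")
      case True
      then have "a + k * d \<in> arith_prog a d m" "b + 0 * d \<in> arith_prog b d n"
        using assms unfolding mem_arith_prog by blast+
      moreover have "z = (a + k * d) + (b + 0 * d)" using k by simp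
      ultimately show ?thesis unfolding sumset_iff by blast
    next
      case False
      define j where "j = k - (m - 1)"
      have j: "k = (m - 1) + j" "j < n"
        using False k(1) unfolding j_def by linarith+
      have "a + (m - 1) * d \<in> arith_prog a d m"
        using assms(1) unfolding mem_arith_prog by (metis diff_less zero_less_one)
      moreover have "b + j * d \<in> arith_prog b d n"
        using j(2) unfolding mem_arith_prog by blast
      moreover have "z = (a + (m - 1) * d) + (b + j * d)"
        using k(2) j(1) by (simp add: algebra_simps)
      ultimately show ?thesis unfolding sumset_iff by blast
    qed
  qed
qed

lemma eq_arith_prog_if_add_closed:
  fixes X :: "nat set"
  assumes fin: "finite X" and ne: "X \<noteq> {}" and d: "0 < d"
    and closed: "\<And>x. x \<in> X \<Longrightarrow> x \<noteq> Max X \<Longrightarrow> x + d \<in> X"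
  shows "X = arith_prog (Min X) d (card X)"
proof -
  have dvd_Max_diff: "d dvd Max X - x" if "x \<in> X" for x
    using that
  proof (induction "Max X - x" arbitrary: x rule: less_induct)
    case less
    show ?case
    proof (cases "x = Max X")
      case False
      then have "x + d \<in> X" using closed less.prems by blast
      then have "x + d \<le> Max X" using fin by simp
      then have "d dvd Max X - (x + d)" using less.hyps \<open>x + d \<in> X\<close> d by simp
      moreover have "Max X - x = (Max X - (x + d)) + d" using \<open>x + d \<le> Max X\<close> by simp
      ultimately show ?thesis by simp
    qed simp
  qed
  define M where "M = (Max X - Min X) div d"
  have Min_le: "x \<in> X \<Longrightarrow> Min X \<le> x" and le_Max: "x \<in> X \<Longrightarrow> x \<le> Max X" for x
    using fin by simp_all
  have "X = arith_prog (Min X) d (Suc M)"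
  proof
    show "X \<subseteq> arith_prog (Min X) d (Suc M)"
    proof
      fix x assume x: "x \<in> X"
      have "d dvd (Max X - Min X) - (Max X - x)"
        using dvd_diff_nat dvd_Max_diff x Min_in[OF fin ne] by blast
      then have "d dvd x - Min X" using Min_le[OF x] le_Max[OF x] by simp
      then have "x = Min X + ((x - Min X) div d) * d" using Min_le[OF x] by simp
      moreover have "(x - Min X) div d \<le> M"
        unfolding M_def using le_Max[OF x] by (simp add: div_le_mono)
      ultimately show "x \<in> arith_prog (Min X) d (Suc M)"
        unfolding mem_arith_prog by (metis less_Suc_eq_le)
    qed
    have "Min X + k * d \<in> X" if "k \<le> M" for k
      using that
    proof (induction k)
      case 0
      show ?case using Min_in[OF fin ne] by simp
    next
      case (Suc k)
      have "Suc k * d \<le> Max X - Min X"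
        using Suc.prems unfolding M_def by (metis div_times_less_eq_dividend le_trans mult_le_mono1)
      then have "Min X + k * d \<noteq> Max X" using d by simp
      then have "Min X + k * d + d \<in> X" using closed Suc by simp
      then show ?case by (simp add: algebra_simps)
    qed
    then show "arith_prog (Min X) d (Suc M) \<subseteq> X"
      unfolding arith_prog_def by auto
  qed
  then show ?thesis using card_arith_prog[OF d] by metis
qed

lemma arith_progs_if_card_sumset_eq:
  fixes X Y :: "nat set"
  assumes fin: "finite X" "finite Y" and two: "2 \<le> card X" "2 \<le> card Y"
    and card_eq: "card (sumset X Y) = card X + card Y - 1"
  obtains a b d where "0 < d" "X = arith_prog a d (card X)" "Y = arith_prog b d (card Y)"
proof -
  have ne: "X \<noteq> {}" "Y \<noteq> {}" using two by auto
  have "0 < card (Y - {Min Y})"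
    using fin(2) ne(2) two(2) by (simp add: card_Diff_singleton)
  then have "Y - {Min Y} \<noteq> {}" by (simp add: card_gt_0_iff)
  define y where "y = Min (Y - {Min Y})"
  have y: "y \<in> Y" "Min Y < y" and y_next: "\<And>y'. y' \<in> Y \<Longrightarrow> Min Y < y' \<Longrightarrow> y \<le> y'"
    using Min_in[OF _ \<open>Y - {Min Y} \<noteq> {}\<close>] fin(2) ne(2)
    unfolding y_def by (auto simp: order.not_eq_order_implies_strict)
  define d where "d = y - Min Y"
  have d: "0 < d" using y(2) unfolding d_def by simp
  have X_eq: "X = arith_prog (Min X) d (card X)"
    using add_gap_mem_if_card_sumset_eq[OF fin ne card_eq y y_next] d
    by (intro eq_arith_prog_if_add_closed[OF fin(1) ne(1) d]) (simp add: d_def)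
  have "Min X + 1 * d \<in> arith_prog (Min X) d (card X)"
    unfolding mem_arith_prog using two(1) by force
  then have x: "Min X + d \<in> X" "Min X < Min X + d" using X_eq d by auto
  have x_next: "Min X + d \<le> x" if "x \<in> X" "Min X < x" for x
  proof -
    obtain k where "x = Min X + k * d" using X_eq \<open>x \<in> X\<close> mem_arith_prog by blast
    with \<open>Min X < x\<close> show ?thesis by (cases k) auto
  qed
  have card_eq': "card (sumset Y X) = card Y + card X - 1"
    using card_eq by (simp add: sumset_commute add.commute)
  have "Y = arith_prog (Min Y) d (card Y)"
    using add_gap_mem_if_card_sumset_eq[OF fin(2,1) ne(2,1) card_eq' x x_next]
    by (intro eq_arith_prog_if_add_closed[OF fin(2) ne(2) d]) simp
  with d X_eq show thesis by (rule that)
qed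

lemma card_index_window:
  fixes e :: int and n T :: nat
  assumes I: "I = {k. k < n \<and> 0 \<le> int k + e \<and> int k + e < int (n + T) - 1}"
    and card: "card I = T" and T: "0 < T" "T < n"
  shows "(0 \<in> I \<and> e = int n - 1) \<or> (0 \<notin> I \<and> e = int T - int n)"
proof (cases "0 \<le> e")
  case True
  then have "I = {..< min n (nat (int (n + T) - 1 - e))}" unfolding I by auto
  then have "min n (nat (int (n + T) - 1 - e)) = T" using card by simp
  then have "e = int n - 1" using T True by linarith
  then show ?thesis using I T by simp
next
  case False
  then have "I = {nat (- e) ..< n}" unfolding I using T by auto
  then have "n - nat (- e) = T" using card by simp
  then have "e = int T - int n" using T False by linarith
  then show ?thesis using I T by simp
qed

text \<open>The translate by b of the progression meets the longer progression in T < n consecutive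
  terms, so it sticks out at exactly one end, and whether a lies in S decides which.\<close>

lemma arith_prog_shift_determined:
  fixes a b c d n T :: nat and S :: "nat set"
  assumes d: "0 < d" and S: "S \<subseteq> arith_prog a d n" "card S = T" "0 < T" "T < n"
    and hits: "\<And>x. x \<in> arith_prog a d n \<Longrightarrow> x + b \<in> arith_prog c d (n + T - 1) \<longleftrightarrow> x \<in> S"
  shows "if a \<in> S then a + b = c + (n - 1) * d else a + b + (n - T) * d = c"
proof -
  define I where "I = {k. k < n \<and> a + k * d \<in> S}"
  have "S = (\<lambda>k. a + k * d) ` I" using S(1) unfolding I_def arith_prog_def by auto
  moreover have "inj_on (\<lambda>k. a + k * d) I" using d by (auto simp: inj_on_def)
  ultimately have card_I: "card I = T" using S(2) card_image by metis
  then obtain k0 where "k0 \<in> I" using S(3) by fastforce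
  then have "a + k0 * d + b \<in> arith_prog c d (n + T - 1)"
    using hits unfolding I_def mem_arith_prog by blast
  then obtain m0 where "a + k0 * d + b = c + m0 * d"
    unfolding mem_arith_prog by blast
  \<comment> \<open>shift, in steps of \<open>d\<close>, between the indexings of the two progressions; it may be negative\<close>
  define e where "e = int m0 - int k0"
  have base: "int a + int b = int c + e * int d"
    using arg_cong[OF \<open>a + k0 * d + b = c + m0 * d\<close>, of int] unfolding e_def
    by (simp add: algebra_simps)
  have hit_iff: "a + k * d + b \<in> arith_prog c d (n + T - 1) \<longleftrightarrow>
      0 \<le> int k + e \<and> int k + e < int (n + T) - 1" for k
  proof -
    have "a + k * d + b = c + m * d \<longleftrightarrow> int m = int k + e" for m
    proof -
      have "int (a + k * d + b) = int c + (int k + e) * int d"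
        using base by (simp add: algebra_simps)
      then have "a + k * d + b = c + m * d \<longleftrightarrow> int c + (int k + e) * int d = int c + int m * int d"
        by (metis of_nat_add of_nat_eq_iff of_nat_mult)
      also have "\<dots> \<longleftrightarrow> int m = int k + e" using d by auto
      finally show ?thesis .
    qed
    then have "a + k * d + b \<in> arith_prog c d (n + T - 1) \<longleftrightarrow> (\<exists>m < n + T - 1. int m = int k + e)"
      unfolding mem_arith_prog by simp
    also have "\<dots> \<longleftrightarrow> 0 \<le> int k + e \<and> int k + e < int (n + T) - 1"
      using S(4) by (auto intro!: exI[of _ "nat (int k + e)"])
    finally show ?thesis .
  qed
  have "I = {k. k < n \<and> 0 \<le> int k + e \<and> int k + e < int (n + T) - 1}"
    unfolding I_def
  proof (intro Collect_cong conj_cong refl)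
    fix k assume "k < n"
    then have "a + k * d \<in> arith_prog a d n" unfolding mem_arith_prog by blast
    then show "a + k * d \<in> S \<longleftrightarrow> 0 \<le> int k + e \<and> int k + e < int (n + T) - 1"
      using hits hit_iff by blast
  qed
  from card_index_window[OF this card_I S(3,4)] show ?thesis
  proof
    assume "0 \<in> I \<and> e = int n - 1"
    moreover from this have "int (a + b) = int (c + (n - 1) * d)"
      using base S(4) by (simp add: of_nat_diff)
    ultimately show ?thesis unfolding I_def by (simp only: of_nat_eq_iff) simp
  next
    assume "0 \<notin> I \<and> e = int T - int n"
    moreover from this have "int (a + b + (n - T) * d) = int c"
      using base S(4) by (simp add: of_nat_diff left_diff_distrib)
    ultimately show ?thesis using S(4) unfolding I_def by (simp only: of_nat_eq_iff) simp
  qed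
qed

locale degree_table_sets =
  fixes Ap As Bp Bs :: "nat set"
  assumes finite: "finite Ap" "finite As" "finite Bp" "finite Bs"
    and disjoint: "Ap \<inter> As = {}" "Bp \<inter> Bs = {}"
    and unique_sum: "\<And>a b a' b'. a \<in> Ap \<Longrightarrow> b \<in> Bp \<Longrightarrow> a' \<in> Ap \<union> As \<Longrightarrow> b' \<in> Bp \<union> Bs
      \<Longrightarrow> a + b = a' + b' \<Longrightarrow> a = a' \<and> b = b'"
begin

definition extra_sums :: "nat set" where
  "extra_sums = sumset (Ap \<union> As) (Bp \<union> Bs) - sumset Ap Bp"

lemma finite_extra_sums: "finite extra_sums"
  unfolding extra_sums_def using finite by (simp add: finite_sumset)

lemma card_Ap_Un_As: "card (Ap \<union> As) = card Ap + card As"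
  using card_Un_disjoint[OF finite(1,2) disjoint(1)] .

lemma card_sumset_Ap_Bp: "card (sumset Ap Bp) = card Ap * card Bp"
proof -
  have "inj_on (\<lambda>(a, b). a + b) (Ap \<times> Bp)"
    by (auto simp: inj_on_def dest: unique_sum)
  then show ?thesis unfolding sumset_eq_image by (simp add: card_image card_cartesian_product)
qed

lemma card_sumset_eq: "card (sumset (Ap \<union> As) (Bp \<union> Bs)) = card Ap * card Bp + card extra_sums"
proof -
  have sub: "sumset Ap Bp \<subseteq> sumset (Ap \<union> As) (Bp \<union> Bs)" by (rule sumset_mono) auto
  moreover have "finite (sumset (Ap \<union> As) (Bp \<union> Bs))" using finite by (simp add: finite_sumset)
  ultimately show ?thesis
    unfolding extra_sums_def card_sumset_Ap_Bp[symmetric]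
    by (metis card_Diff_subset card_mono finite_subset le_add_diff_inverse)
qed

lemma add_mem_extra_sums:
  assumes "a \<in> Ap \<union> As" "b \<in> Bp \<union> Bs" "a \<notin> Ap \<or> b \<notin> Bp"
  shows "a + b \<in> extra_sums"
proof -
  have "a + b \<notin> sumset Ap Bp"
  proof
    assume "a + b \<in> sumset Ap Bp"
    then obtain a' b' where "a' \<in> Ap" "b' \<in> Bp" "a + b = a' + b'" unfolding sumset_iff by blast
    with unique_sum[of a' b' a b] assms show False by auto
  qed
  with assms show ?thesis unfolding extra_sums_def sumset_def by blast
qed

lemma add_not_mem_extra_sums: "a \<in> Ap \<Longrightarrow> b \<in> Bp \<Longrightarrow> a + b \<notin> extra_sums"
  unfolding extra_sums_def sumset_def by blast

lemma swap: "degree_table_sets Bp Bs Ap As"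
  using finite disjoint unique_sum by unfold_locales (auto simp: add.commute)

lemma swap_extra_sums: "degree_table_sets.extra_sums Bp Bs Ap As = extra_sums"
  using degree_table_sets.extra_sums_def[OF swap] extra_sums_def sumset_commute by simp

lemma card_extra_sums_ge:
  assumes "Ap \<union> As \<noteq> {}" "Bs \<noteq> {}"
  shows "card (Ap \<union> As) + card Bs - 1 \<le> card extra_sums"
proof -
  have "sumset (Ap \<union> As) Bs \<subseteq> extra_sums"
    using add_mem_extra_sums disjoint(2) unfolding sumset_def by blast
  then have "card (sumset (Ap \<union> As) Bs) \<le> card extra_sums"
    by (rule card_mono[OF finite_extra_sums])
  moreover have "card (Ap \<union> As) + card Bs - 1 \<le> card (sumset (Ap \<union> As) Bs)"
    using assms finite by (intro card_sumset_ge) auto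
  ultimately show ?thesis by simp
qed

lemma card_Ap_add_card_Bp_le_card_extra_sums:
  assumes "As \<noteq> {}" "Bs \<noteq> {}"
  shows "card Ap + card Bp \<le> card extra_sums"
proof -
  obtain a0 b0 where a0: "a0 \<in> As" and b0: "b0 \<in> Bs" using assms by blast
  let ?U = "(\<lambda>a. a + b0) ` Ap" and ?V = "(\<lambda>b. a0 + b) ` Bp"
  have "finite (?U \<inter> ?V)" using finite by simp
  then have "card (?U \<inter> ?V) \<le> 1"
  proof (unfold One_nat_def card_le_Suc0_iff_eq, intro ballI)
    fix x y assume "x \<in> ?U \<inter> ?V" "y \<in> ?U \<inter> ?V"
    then obtain a b a' b' where "a \<in> Ap" "b \<in> Bp" "x = a + b0" "x = a0 + b"
      and "a' \<in> Ap" "b' \<in> Bp" "y = a' + b0" "y = a0 + b'"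
      by auto
    moreover from this have "a + b' = a' + b" by simp
    ultimately show "x = y" using unique_sum[of a b' a' b] by auto
  qed
  moreover have "card ?U + card ?V = card (?U \<union> ?V) + card (?U \<inter> ?V)"
    using finite by (intro card_Un_Int) auto
  moreover have "card ?U = card Ap" "card ?V = card Bp"
    by (auto intro!: card_image simp: inj_on_def)
  moreover have "a0 + b0 \<notin> ?U \<union> ?V" using a0 b0 disjoint by auto
  moreover have "insert (a0 + b0) (?U \<union> ?V) \<subseteq> extra_sums"
    using add_mem_extra_sums a0 b0 disjoint by blast
  then have "card (insert (a0 + b0) (?U \<union> ?V)) \<le> card extra_sums"
    by (rule card_mono[OF finite_extra_sums])
  ultimately show ?thesis using finite by simp
qed

lemma card_extra_sums_gt_if_two_le_card_Bs:
  assumes Bp: "2 \<le> card Bp" and Ap: "Ap \<noteq> {}"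
    and T: "card As = card Bs" "2 \<le> card Bs"
  shows "card (Ap \<union> As) + card Bs - 1 < card extra_sums"
proof (rule ccontr)
  let ?A = "Ap \<union> As" and ?T = "card Bs"
  let ?n = "card ?A"
  assume small: "\<not> ?thesis"
  have fin_A: "finite ?A" using finite by simp
  have n: "?n = card Ap + ?T"
    using card_Ap_Un_As T(1) by simp
  have "0 < card Ap" using Ap finite(1) by (simp add: card_gt_0_iff)
  have sub: "sumset ?A Bs \<subseteq> extra_sums"
    using add_mem_extra_sums disjoint(2) unfolding sumset_def by blast
  have "?n + ?T - 1 \<le> card (sumset ?A Bs)"
    using fin_A finite(4) T(2) Ap by (intro card_sumset_ge) auto
  moreover have "card (sumset ?A Bs) \<le> card extra_sums"
    by (rule card_mono[OF finite_extra_sums sub])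
  ultimately have card_eq: "card (sumset ?A Bs) = ?n + ?T - 1"
    and sumset_eq: "sumset ?A Bs = extra_sums"
    using small n card_subset_eq[OF finite_extra_sums sub] by auto
  have "2 \<le> ?n" using n T(2) by simp
  obtain a s d where d: "0 < d" "?A = arith_prog a d ?n" "Bs = arith_prog s d ?T"
    by (rule arith_progs_if_card_sumset_eq[OF fin_A finite(4) \<open>2 \<le> ?n\<close> T(2) card_eq])
  have extra_eq: "extra_sums = arith_prog (a + s) d (?n + ?T - 1)"
    using sumset_eq arg_cong2[OF d(2,3), of sumset] sumset_arith_prog[of ?n ?T a d s] n T(2)
    by simp
  have shift: "if a \<in> As then a + b = a + s + (?n - 1) * d else a + b + (?n - ?T) * d = a + s"
    if b: "b \<in> Bp" for b
  proof (rule arith_prog_shift_determined[OF d(1)])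
    show "As \<subseteq> arith_prog a d ?n" using d(2) by blast
    show "card As = ?T" "0 < ?T" "?T < ?n" using T n \<open>0 < card Ap\<close> by auto
    fix x assume "x \<in> arith_prog a d ?n"
    then have "x \<in> ?A" using d(2) by blast
    then show "x + b \<in> arith_prog (a + s) d (?n + ?T - 1) \<longleftrightarrow> x \<in> As"
      using add_mem_extra_sums add_not_mem_extra_sums disjoint(1) b extra_eq by blast
  qed
  obtain b b' where b: "b \<in> Bp" "b' \<in> Bp" "b \<noteq> b'"
    using Bp card_le_Suc0_iff_eq[OF finite(3)] by (metis not_less_eq_eq numeral_2_eq_2)
  with shift[OF b(1)] shift[OF b(2)] show False by (simp split: if_splits)
qed

lemma card_extra_sums_gt:
  assumes "2 \<le> card Bp" "Ap \<noteq> {}" "card As = card Bs" "Bs \<noteq> {}"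
  shows "card (Ap \<union> As) + card Bs - 1 < card extra_sums"
proof (cases "card Bs = 1")
  case True
  then have "As \<noteq> {}" using assms(3) by auto
  then have "card Ap + card Bp \<le> card extra_sums"
    using assms(4) by (rule card_Ap_add_card_Bp_le_card_extra_sums)
  then show ?thesis
    using True assms(1,3) card_Ap_Un_As by simp
next
  case False
  moreover have "card Bs \<noteq> 0" using assms(4) finite(4) by simp
  ultimately have "2 \<le> card Bs" by linarith
  with assms(1-3) show ?thesis by (rule card_extra_sums_gt_if_two_le_card_Bs)
qed

lemma max_add_twice_card_Bs_le_card_extra_sums:
  assumes "Ap \<noteq> {}" "Bp \<noteq> {}" "card As = card Bs" "Bs \<noteq> {}"
  shows "max (card Ap) (card Bp) + 2 * card Bs - 1 \<le> card extra_sums"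
proof -
  have "As \<noteq> {}" using assms(3,4) finite(4) by auto
  then have "card Ap + 2 * card Bs - 1 \<le> card extra_sums"
    using card_extra_sums_ge assms card_Ap_Un_As by simp
  moreover have "card Bp + 2 * card Bs - 1 \<le> card extra_sums"
    using degree_table_sets.card_extra_sums_ge[OF swap] assms \<open>As \<noteq> {}\<close>
      degree_table_sets.card_Ap_Un_As[OF swap]
    by (simp add: swap_extra_sums mult_2 add.assoc)
  ultimately show ?thesis by simp
qed

lemma max_add_twice_card_Bs_lt_card_extra_sums:
  assumes "2 \<le> card Ap" "2 \<le> card Bp" "card As = card Bs" "Bs \<noteq> {}"
  shows "max (card Ap) (card Bp) + 2 * card Bs - 1 < card extra_sums"
proof -
  have "Ap \<noteq> {}" "Bp \<noteq> {}" "As \<noteq> {}" using assms finite(4) by auto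
  then have "card Ap + 2 * card Bs - 1 < card extra_sums"
    using card_extra_sums_gt assms card_Ap_Un_As by simp
  moreover have "card Bp + 2 * card Bs - 1 < card extra_sums"
    using degree_table_sets.card_extra_sums_gt[OF swap] assms \<open>Ap \<noteq> {}\<close> \<open>As \<noteq> {}\<close>
      \<open>Bp \<noteq> {}\<close> degree_table_sets.card_Ap_Un_As[OF swap]
    by (simp add: swap_extra_sums mult_2 add.assoc)
  ultimately show ?thesis by simp
qed

end

lemma degree_table_sets_if_degree_table:
  assumes "degree_table K L T ap as bp bs"
  shows "degree_table_sets (set ap) (set as) (set bp) (set bs)"
proof
  note dt = assms[unfolded degree_table_def]
  show "finite (set ap)" "finite (set as)" "finite (set bp)" "finite (set bs)" by simp_all
  show "set ap \<inter> set as = {}" "set bp \<inter> set bs = {}" using dt by auto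
  fix a b a' b'
  assume "a \<in> set ap" "b \<in> set bp" "a' \<in> set ap \<union> set as" "b' \<in> set bp \<union> set bs"
    and "a + b = a' + b'"
  moreover have "a + b \<in> sumset (set ap) (set bp)"
    using \<open>a \<in> set ap\<close> \<open>b \<in> set bp\<close> unfolding sumset_def by blast
  ultimately show "a = a' \<and> b = b'"
    using dt by (metis (no_types, lifting) Un_iff fst_conv mem_Sigma_iff set_append snd_conv)
qed

lemma card_sets_if_degree_table:
  assumes "degree_table K L T ap as bp bs"
  shows "card (set ap) = K" "card (set as) = T" "card (set bp) = L" "card (set bs) = T"
  using assms distinct_card unfolding degree_table_def by (metis distinct_append)+

lemma add_twice_sub_mult_min_le:
  fixes K L T E :: nat
  assumes "0 < T" "max K L + 2 * T - 1 \<le> E" "K + L \<le> E"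
  shows "int (K + L + 2 * T) - 1 - int T * int (min K (min L T)) \<le> int E"
proof (cases "min K L \<le> T")
  case True
  then have "min K (min L T) = min K L" by linarith
  moreover have "int (min K L) \<le> int T * int (min K L)"
    using assms(1) by (cases T) (auto simp: algebra_simps)
  moreover have "K + L = max K L + min K L" by simp
  ultimately show ?thesis using assms(1,2) by linarith
next
  case False
  have "0 \<le> (int T - 1) ^ 2" by simp
  then have "2 * int T - 1 \<le> int T * int T" by (simp add: power2_eq_square algebra_simps)
  moreover have "min K (min L T) = T" using False by linarith
  ultimately show ?thesis using assms(3) by simp
qed

theorem theorem2:
  fixes K L T :: nat and ap as bp bs :: "nat list"
  assumes "0 < K" and "0 < L" and "0 < T"
    and "degree_table K L T ap as bp bs"
  shows "K * L + max K L + 2 * T - 1 \<le> NN (ap @ as) (bp @ bs)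
    \<and> ((3 * max K L + 3 * T - 2 < K * L \<or> (2 \<le> K \<and> K = L))
           \<longrightarrow> K * L + max K L + 2 * T \<le> NN (ap @ as) (bp @ bs))
    \<and> int (K * L + K + L + 2 * T) - 1 - int T * int (min K (min L T))
           \<le> int (NN (ap @ as) (bp @ bs))"
proof -
  interpret degree_table_sets "set ap" "set as" "set bp" "set bs"
    using assms(4) by (rule degree_table_sets_if_degree_table)
  note card = card_sets_if_degree_table[OF assms(4)]
  have ne: "set ap \<noteq> {}" "set as \<noteq> {}" "set bp \<noteq> {}" "set bs \<noteq> {}"
    using card assms(1-3) by auto
  have N: "NN (ap @ as) (bp @ bs) = K * L + card extra_sums"
    unfolding NN_def using card_sumset_eq card by simp
  have lower: "max K L + 2 * T - 1 \<le> card extra_sums"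
    using max_add_twice_card_Bs_le_card_extra_sums ne card by simp
  have strict: "max K L + 2 * T - 1 < card extra_sums" if "2 \<le> K" "2 \<le> L"
    using max_add_twice_card_Bs_lt_card_extra_sums ne card that by simp
  have "K + L \<le> card extra_sums"
    using card_Ap_add_card_Bp_le_card_extra_sums ne card by simp
  then have "int (K + L + 2 * T) - 1 - int T * int (min K (min L T)) \<le> int (card extra_sums)"
    using add_twice_sub_mult_min_le assms(3) lower by blast
  moreover have "3 * max K L + 3 * T - 2 < K * L \<or> 2 \<le> K \<and> K = L \<Longrightarrow> 2 \<le> K \<and> 2 \<le> L"
    using assms(1,2) by (cases "K = 1 \<or> L = 1") (auto simp: max_def split: if_splits)
  ultimately show ?thesis using N lower strict by auto
qed

end
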